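(* Let $(\mathcal P,\cdot,[-,\dots,-])$ be a nonzero solvable finite-dimensional Poisson $n$-Lie algebra over an algebraically closed field of characteristic zero. Then there exists a nonzero vector $v\in\mathcal P$ that is a common eigenvector of all operators $P_x$ ($x\in\mathcal P$) and $Q_y$ ($y\in\wedge^{n-1}\mathcal P$).
   Context: A Poisson $n$-Lie algebra is a commutative associative algebra $(\mathcal P,\cdot)$ with an $n$-linear skew-symmetric bracket satisfying the fundamental identity $[x_1,\dots,x_{n-1},[y_1,\dots,y_n]]=\sum_{i=1}^n[y_1,\dots,[x_1,\dots,x_{n-1},y_i],\dots,y_n]$ and the Leibniz rule $[y\cdot z,x_2,\dots,x_n]=y\cdot[z,x_2,\dots,x_n]+z\cdot[y,x_2,\dots,x_n]$. $P_x(z)=x\cdot z$; for $y=y_1\wedge\cdots\wedge y_{n-1}$, $Q_y(z)=[y_1,\dots,y_{n-1},z]$, extended linearly. $\mathcal P$ is solvable if $\mathcal P^{(s)}=0$ for some $s$, where $\mathcal P^{(1)}=\mathcal P$, $\mathcal P^{(k+1)}=[\mathcal P^{(k)},\mathcal P^{(k)},\mathcal P,\dots,\mathcal P]+\mathcal P^{(k)}\cdot\mathcal P^{(k)}$ (linear spans). *)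

theory Defs
  imports "HOL-Computational_Algebra.Polynomial"
begin

definition finite_dim_space :: "('k::field \<Rightarrow> 'v::ab_group_add \<Rightarrow> 'v) \<Rightarrow> bool" where
  "finite_dim_space scale \<longleftrightarrow> vector_space scale \<and>
     (\<exists>B. finite B \<and> module.span scale B = UNIV)"

definition comm_assoc_algebra ::
  "('k::field \<Rightarrow> 'v::ab_group_add \<Rightarrow> 'v) \<Rightarrow> ('v \<Rightarrow> 'v \<Rightarrow> 'v) \<Rightarrow> bool" where
  "comm_assoc_algebra scale mul \<longleftrightarrow>
     (\<forall>x y z. mul (x + y) z = mul x z + mul y z) \<and>
     (\<forall>c x y. mul (scale c x) y = scale c (mul x y)) \<and>
     (\<forall>x y. mul x y = mul y x) \<and>
     (\<forall>x y z. mul (mul x y) z = mul x (mul y z))"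

definition n_multilinear ::
  "('k::field \<Rightarrow> 'v::ab_group_add \<Rightarrow> 'v) \<Rightarrow> nat \<Rightarrow> ('v list \<Rightarrow> 'v) \<Rightarrow> bool" where
  "n_multilinear scale n br \<longleftrightarrow>
     (\<forall>xs i a b. length xs = n \<longrightarrow> i < n \<longrightarrow>
        br (xs[i := a + b]) = br (xs[i := a]) + br (xs[i := b])) \<and>
     (\<forall>xs i c a. length xs = n \<longrightarrow> i < n \<longrightarrow>
        br (xs[i := scale c a]) = scale c (br (xs[i := a])))"

definition skew_symmetric :: "nat \<Rightarrow> ('v::ab_group_add list \<Rightarrow> 'v) \<Rightarrow> bool" where
  "skew_symmetric n br \<longleftrightarrow>
     (\<forall>xs i j. length xs = n \<longrightarrow> i < n \<longrightarrow> j < n \<longrightarrow> i \<noteq> j \<longrightarrow>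
        br (xs[i := xs ! j, j := xs ! i]) = - br xs)"

definition fundamental_identity :: "nat \<Rightarrow> ('v::ab_group_add list \<Rightarrow> 'v) \<Rightarrow> bool" where
  "fundamental_identity n br \<longleftrightarrow>
     (\<forall>xs ys. length xs = n - 1 \<longrightarrow> length ys = n \<longrightarrow>
        br (xs @ [br ys]) = (\<Sum>i<n. br (ys[i := br (xs @ [ys ! i])])))"

definition leibniz_rule ::
  "nat \<Rightarrow> ('v::ab_group_add \<Rightarrow> 'v \<Rightarrow> 'v) \<Rightarrow> ('v list \<Rightarrow> 'v) \<Rightarrow> bool" where
  "leibniz_rule n mul br \<longleftrightarrow>
     (\<forall>y z xs. length xs = n - 1 \<longrightarrow>
        br (mul y z # xs) = mul y (br (z # xs)) + mul z (br (y # xs)))"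

definition poisson_n_lie_algebra ::
  "('k::field \<Rightarrow> 'v::ab_group_add \<Rightarrow> 'v) \<Rightarrow> nat \<Rightarrow> ('v \<Rightarrow> 'v \<Rightarrow> 'v) \<Rightarrow> ('v list \<Rightarrow> 'v) \<Rightarrow> bool" where
  "poisson_n_lie_algebra scale n mul br \<longleftrightarrow>
     vector_space scale \<and> comm_assoc_algebra scale mul \<and>
     n_multilinear scale n br \<and> skew_symmetric n br \<and>
     fundamental_identity n br \<and> leibniz_rule n mul br"

text \<open>Derived series, shifted by one: derived_series ... 0 = P^(1) = P and
  derived_series ... k = P^(k+1).\<close>
primrec derived_series ::
  "('k::field \<Rightarrow> 'v::ab_group_add \<Rightarrow> 'v) \<Rightarrow> nat \<Rightarrow> ('v \<Rightarrow> 'v \<Rightarrow> 'v) \<Rightarrow> ('v list \<Rightarrow> 'v) \<Rightarrow> nat \<Rightarrow> 'v set" where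
  "derived_series scale n mul br 0 = UNIV"
| "derived_series scale n mul br (Suc k) =
     module.span scale
       ({br (a # b # cs) | a b cs. a \<in> derived_series scale n mul br k \<and>
                                  b \<in> derived_series scale n mul br k \<and> length cs = n - 2}
        \<union> {mul a b | a b. a \<in> derived_series scale n mul br k \<and>
                          b \<in> derived_series scale n mul br k})"

definition solvable_poisson ::
  "('k::field \<Rightarrow> 'v::ab_group_add \<Rightarrow> 'v) \<Rightarrow> nat \<Rightarrow> ('v \<Rightarrow> 'v \<Rightarrow> 'v) \<Rightarrow> ('v list \<Rightarrow> 'v) \<Rightarrow> bool" where
  "solvable_poisson scale n mul br \<longleftrightarrow> (\<exists>s. derived_series scale n mul br s = {0})"

end

theory Submission
  imports Defs
begin

(* Write Q_y v = [y_1, ..., y_(n-1), v] and P_x v = x v. By the fundamental identity [Q_x, Q_y] is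
   a sum of operators Q, by the Leibniz rule [Q_x, P_z] = P_(Q_x z), and [P_z, P_w] = 0. Solvability
   of the algebra therefore yields a chain C_0 >= C_1 >= ... >= C_m of additively closed operator
   sets, with all Q_y and P_x in C_0, [C_k, C_0] <= C_k, [C_k, C_k] <= C_(k+1) and C_m abelian.
   Lie's theorem for such a chain gives the common eigenvector: descending the chain, one keeps a
   nonzero C_0-invariant subspace on which C_k acts by scalars. Commutators of C_(k-1) then act by
   scalars of trace zero, hence by zero in characteristic zero, so C_(k-1) is commutative there and
   has a common eigenvector; its weight space is C_0-invariant by a trace argument on cyclic
   subspaces. *)

definition commutator :: "('a \<Rightarrow> 'a::ab_group_add) \<Rightarrow> ('a \<Rightarrow> 'a) \<Rightarrow> 'a \<Rightarrow> 'a" where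
  "commutator a b = (\<lambda>v. a (b v) - b (a v))"

inductive_set add_closure :: "('a \<Rightarrow> 'b::ab_group_add) set \<Rightarrow> ('a \<Rightarrow> 'b) set" for G where
  zero: "(\<lambda>v. 0) \<in> add_closure G"
| base: "g \<in> G \<Longrightarrow> g \<in> add_closure G"
| add: "a \<in> add_closure G \<Longrightarrow> b \<in> add_closure G \<Longrightarrow> (\<lambda>v. a v + b v) \<in> add_closure G"

lemma add_closure_mono: "G \<subseteq> H \<Longrightarrow> add_closure G \<subseteq> add_closure H"
proof
  show "a \<in> add_closure H" if "G \<subseteq> H" "a \<in> add_closure G" for a
    using that(2,1) by induction (auto intro: add_closure.intros)
qed

lemma add_closure_sum:
  "finite I \<Longrightarrow> (\<And>i. i \<in> I \<Longrightarrow> f i \<in> G) \<Longrightarrow> (\<lambda>v. \<Sum>i\<in>I. f i v) \<in> add_closure G"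
proof (induction I rule: finite_induct)
  case (insert i I)
  then have "(\<lambda>v. f i v + (\<Sum>i\<in>I. f i v)) \<in> add_closure G"
    by (intro add_closure.add add_closure.base insert.IH) auto
  with insert.hyps show ?case by simp
qed (simp add: add_closure.zero)

lemma add_closure_empty: "add_closure {} = {\<lambda>v. 0}"
proof -
  have "a = (\<lambda>v. 0)" if "a \<in> add_closure {}" for a :: "'a \<Rightarrow> 'b"
    using that by induction auto
  then show ?thesis by (auto intro: add_closure.zero)
qed

locale endo_space = vector_space scale
  for scale :: "'k::field \<Rightarrow> 'v::ab_group_add \<Rightarrow> 'v"
begin

sublocale vector_space_pair scale scale ..

(* In Complex_Main, plain linear denotes real-linear maps. *)
abbreviation linear_map :: "('v \<Rightarrow> 'v) \<Rightarrow> bool" where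
  "linear_map \<equiv> Vector_Spaces.linear scale scale"

lemma linear_map_add_closure:
  assumes "\<forall>g\<in>G. linear_map g" "a \<in> add_closure G"
  shows "linear_map a"
  using assms(2) by induction (use assms(1) linear_zero linear_compose_add in auto)

lemma commutator_add_closure_left:
  assumes "\<forall>g\<in>G. commutator g b \<in> add_closure K" "linear_map b" "a \<in> add_closure G"
  shows "commutator a b \<in> add_closure K"
  using assms(3)
proof induction
  case zero
  then show ?case using assms(2) by (simp add: commutator_def linear_0 add_closure.zero)
next
  case (add a1 a2)
  have "commutator (\<lambda>v. a1 v + a2 v) b = (\<lambda>v. commutator a1 b v + commutator a2 b v)"
    using assms(2) by (auto simp: commutator_def linear_add)
  with add.IH show ?case by (simp add: add_closure.add)
qed (use assms(1) in auto)

lemma commutator_add_closure_right: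
  assumes "\<forall>h\<in>H. commutator a h \<in> add_closure K" "linear_map a" "b \<in> add_closure H"
  shows "commutator a b \<in> add_closure K"
  using assms(3)
proof induction
  case zero
  then show ?case using assms(2) by (simp add: commutator_def linear_0 add_closure.zero)
next
  case (add b1 b2)
  have "commutator a (\<lambda>v. b1 v + b2 v) = (\<lambda>v. commutator a b1 v + commutator a b2 v)"
    using assms(2) by (auto simp: commutator_def linear_add)
  with add.IH show ?case by (simp add: add_closure.add)
qed (use assms(1) in auto)

lemma commutator_add_closure:
  assumes "\<forall>g\<in>G. \<forall>h\<in>H. commutator g h \<in> add_closure K"
    and "\<forall>g\<in>G. linear_map g" "\<forall>h\<in>H. linear_map h"
    and "a \<in> add_closure G" "b \<in> add_closure H"
  shows "commutator a b \<in> add_closure K"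
proof (rule commutator_add_closure_left[OF _ linear_map_add_closure[OF assms(3,5)] assms(4)])
  show "\<forall>g\<in>G. commutator g b \<in> add_closure K"
  proof
    fix g assume "g \<in> G"
    then show "commutator g b \<in> add_closure K"
      using assms(1,2) by (intro commutator_add_closure_right[OF _ _ assms(5)]) auto
  qed
qed

lemma linear_image_span_subset:
  assumes "linear_map T" "T ` S \<subseteq> span S'"
  shows "T ` span S \<subseteq> span S'"
  using linear_span_image[OF assms(1), of S] span_minimal[OF assms(2) subspace_span] by simp

lemma subspace_eigenspace: "linear_map T \<Longrightarrow> subspace {w. T w = scale c w}"
  unfolding subspace_def
  by (simp add: linear_0 linear_add linear_scale scale_right_distrib scale_left_commute)

lemma commuting_eigenspace_invariant:
  assumes "linear_map S" "S ` W \<subseteq> W" "\<forall>w\<in>W. S (T w) = T (S w)"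
  shows "S ` (W \<inter> {w. T w = scale c w}) \<subseteq> W \<inter> {w. T w = scale c w}"
proof
  fix y assume "y \<in> S ` (W \<inter> {w. T w = scale c w})"
  then obtain w where w: "w \<in> W" "T w = scale c w" "y = S w"
    by blast
  from assms(3) w(1) have "S (T w) = T (S w)"
    by (rule bspec)
  then have "T y = scale c y"
    using assms(1) w(2,3) by (simp add: linear_scale)
  moreover have "y \<in> W"
    using assms(2) w by blast
  ultimately show "y \<in> W \<inter> {w. T w = scale c w}"
    by simp
qed

lemma krylov_independent:
  assumes "\<And>i. i < m \<Longrightarrow> (T ^^ i) w \<notin> span ((\<lambda>j. (T ^^ j) w) ` {..<i})"
  shows "independent ((\<lambda>i. (T ^^ i) w) ` {..<m}) \<and> inj_on (\<lambda>i. (T ^^ i) w) {..<m}"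
  using assms
proof (induction m)
  case 0
  show ?case
    by (simp add: independent_empty)
next
  case (Suc m)
  let ?K = "\<lambda>i. (T ^^ i) w"
  have IH: "independent (?K ` {..<m}) \<and> inj_on ?K {..<m}"
    using Suc.prems by (intro Suc.IH) simp
  have new: "?K m \<notin> span (?K ` {..<m})"
    using Suc.prems[of m] by simp
  then have "?K m \<notin> ?K ` {..<m}"
    by (meson span_base)
  with IH new show ?case
    by (simp add: lessThan_Suc independent_insertI)
qed

lemma krylov_image_subset_span:
  assumes "(T ^^ d) w \<in> span ((\<lambda>i. (T ^^ i) w) ` {..<d})"
  shows "T ` (\<lambda>i. (T ^^ i) w) ` {..<d} \<subseteq> span ((\<lambda>i. (T ^^ i) w) ` {..<d})"
proof -
  have "T ((T ^^ j) w) \<in> span ((\<lambda>i. (T ^^ i) w) ` {..<d})" if j: "j < d" for j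
  proof (cases "Suc j = d")
    case False
    with j have "(T ^^ Suc j) w \<in> (\<lambda>i. (T ^^ i) w) ` {..<d}"
      by (intro imageI) auto
    then show ?thesis
      by (simp add: span_base)
  qed (use assms in auto)
  then show ?thesis
    by auto
qed

definition poly_apply :: "('v \<Rightarrow> 'v) \<Rightarrow> 'k poly \<Rightarrow> 'v \<Rightarrow> 'v" where
  "poly_apply T p u = (\<Sum>i\<le>degree p. scale (coeff p i) ((T ^^ i) u))"

lemma poly_apply_eq_sum:
  assumes "degree p \<le> N"
  shows "poly_apply T p u = (\<Sum>i\<le>N. scale (coeff p i) ((T ^^ i) u))"
  unfolding poly_apply_def
  by (rule sum.mono_neutral_left) (use assms in \<open>auto simp: coeff_eq_0\<close>)

lemma poly_apply_linear_factor:
  assumes "linear_map T"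
  shows "poly_apply T ([:-r, 1:] * q) u = T (poly_apply T q u) - scale r (poly_apply T q u)"
proof -
  let ?N = "degree q"
  have eq: "[:-r, 1:] * q = smult (-r) q + pCons 0 q"
    by (simp add: mult_pCons_left)
  have deg: "degree ([:-r, 1:] * q) \<le> Suc ?N"
    unfolding eq by (intro degree_add_le) (auto simp: degree_pCons_le)
  have "poly_apply T ([:-r, 1:] * q) u
      = (\<Sum>i\<le>Suc ?N. scale (- r * coeff q i) ((T ^^ i) u))
        + (\<Sum>i\<le>Suc ?N. scale (coeff (pCons 0 q) i) ((T ^^ i) u))"
    unfolding poly_apply_eq_sum[OF deg] unfolding eq coeff_add coeff_smult scale_left_distrib
    by (rule sum.distrib)
  also have "(\<Sum>i\<le>Suc ?N. scale (- r * coeff q i) ((T ^^ i) u)) = - scale r (poly_apply T q u)"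
    by (simp add: poly_apply_eq_sum[of q "Suc ?N"] scale_sum_right sum_negf[symmetric]
        del: sum.atMost_Suc)
  also have "(\<Sum>i\<le>Suc ?N. scale (coeff (pCons 0 q) i) ((T ^^ i) u))
      = (\<Sum>i\<le>?N. scale (coeff q i) (T ((T ^^ i) u)))"
    by (subst sum.atMost_Suc_shift) (simp add: funpow_swap1)
  also have "\<dots> = T (poly_apply T q u)"
    by (simp add: poly_apply_def linear_sum[OF assms] linear_scale[OF assms])
  finally show ?thesis by (simp add: algebra_simps)
qed

lemma poly_apply_in_subspace:
  assumes "subspace W" "T ` W \<subseteq> W" "u \<in> W"
  shows "poly_apply T p u \<in> W"
proof -
  have "(T ^^ i) u \<in> W" for i
    by (induction i) (use assms(2,3) in auto)
  then show ?thesis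
    unfolding poly_apply_def by (intro subspace_sum subspace_scale assms(1))
qed

lemma triangular_image_subset_span:
  assumes "\<And>b. b \<in> B \<Longrightarrow> A b - scale c b \<in> span (B - {b})"
  shows "A ` B \<subseteq> span B"
proof
  fix y assume "y \<in> A ` B"
  then obtain b where b: "b \<in> B" "y = A b"
    by blast
  have "A b - scale c b \<in> span B"
    using assms[OF b(1)] span_mono[of "B - {b}" B] by blast
  then have "A b - scale c b + scale c b \<in> span B"
    by (rule span_add[OF _ span_scale[OF span_base[OF b(1)]]])
  with b(2) show "y \<in> span B"
    by simp
qed

definition trace_on :: "'v set \<Rightarrow> ('v \<Rightarrow> 'v) \<Rightarrow> 'k" where
  "trace_on B A = (\<Sum>b\<in>B. representation B (A b) b)"

lemma representation_linear_image:
  assumes B: "independent B" "finite B" and A: "linear_map A" "A ` B \<subseteq> span B"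
    and v: "v \<in> span B"
  shows "representation B (A v) x = (\<Sum>b\<in>B. representation B v b * representation B (A b) x)"
proof -
  have "A v = A (\<Sum>b\<in>B. scale (representation B v b) b)"
    using sum_representation_eq[OF B(1) v B(2) order_refl] by simp
  also have "\<dots> = (\<Sum>b\<in>B. scale (representation B v b) (A b))"
    by (simp add: linear_sum[OF A(1)] linear_scale[OF A(1)])
  finally show ?thesis
    using A(2) by (simp add: representation_sum[OF B(1)] representation_scale[OF B(1)]
        span_scale image_subset_iff)
qed

lemma trace_on_commutator:
  assumes B: "independent B" "finite B"
    and S: "linear_map S" "S ` B \<subseteq> span B" and T: "linear_map T" "T ` B \<subseteq> span B"
  shows "trace_on B (commutator S T) = 0"
proof -
  let ?r = "representation B"
  have comp: "trace_on B (\<lambda>v. S' (T' v)) = (\<Sum>b\<in>B. \<Sum>b'\<in>B. ?r (T' b) b' * ?r (S' b') b)"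
    if "linear_map S'" "S' ` B \<subseteq> span B" "T' ` B \<subseteq> span B" for S' T'
    unfolding trace_on_def
    using that by (intro sum.cong refl representation_linear_image[OF B]) auto
  have "S ` span B \<subseteq> span B" "T ` span B \<subseteq> span B"
    using S T by (simp_all add: linear_image_span_subset)
  then have "S (T b) \<in> span B" "T (S b) \<in> span B" if "b \<in> B" for b
    using that span_base by blast+
  then have "trace_on B (commutator S T) = trace_on B (\<lambda>v. S (T v)) - trace_on B (\<lambda>v. T (S v))"
    unfolding trace_on_def commutator_def sum_subtractf[symmetric]
    by (intro sum.cong refl) (simp add: representation_diff[OF B(1)])
  also have "\<dots> = 0"
    unfolding comp[OF S T(2)] comp[OF T S(2)]
    by (subst sum.swap) (simp add: mult.commute)
  finally show ?thesis .
qed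

lemma trace_on_triangular:
  assumes B: "independent B" "finite B"
    and A: "\<And>b. b \<in> B \<Longrightarrow> A b - scale c b \<in> span (B - {b})"
  shows "trace_on B A = of_nat (card B) * c"
proof -
  have "representation B (A b) b = c" if b: "b \<in> B" for b
  proof -
    let ?x = "A b - scale c b"
    have x: "?x \<in> span B"
      using A[OF b] span_mono[of "B - {b}" B] by blast
    have "representation B ?x b = representation (B - {b}) ?x b"
      using representation_extend[OF B(1) A[OF b]] by auto
    also have "\<dots> = 0"
      using representation_ne_zero by blast
    finally have "representation B ?x b = 0" .
    have "representation B (A b) b = representation B (?x + scale c b) b"
      by simp
    also have "\<dots> = representation B ?x b + representation B (scale c b) b"
      by (rule fun_cong[OF representation_add[OF B(1) span_scale[OF span_base[OF b]] x]])
    also have "\<dots> = c"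
      using \<open>representation B ?x b = 0\<close>
      by (simp add: representation_scale[OF B(1) span_base[OF b]] representation_basis[OF B(1) b])
    finally show ?thesis .
  qed
  then show ?thesis
    unfolding trace_on_def by simp
qed

lemma krylov_triangular:
  assumes x: "linear_map x" and ideal: "\<forall>a\<in>F. commutator a x \<in> F"
    and w: "\<forall>a\<in>F. a w = scale (\<mu> a) w"
  shows "a \<in> F \<Longrightarrow> a ((x ^^ i) w) - scale (\<mu> a) ((x ^^ i) w) \<in> span ((\<lambda>j. (x ^^ j) w) ` {..<i})"
proof (induction i arbitrary: a)
  case 0
  then show ?case using w by (simp add: span_zero)
next
  case (Suc i)
  let ?K = "\<lambda>j. (x ^^ j) w"
  let ?U = "span (?K ` {..<Suc i})"
  define u where "u = a (?K i) - scale (\<mu> a) (?K i)"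
  define u' where "u' = commutator a x (?K i) - scale (\<mu> (commutator a x)) (?K i)"
  have "u \<in> span (?K ` {..<i})" "u' \<in> span (?K ` {..<i})"
    using Suc ideal by (auto simp: u_def u'_def)
  moreover have "x ` span (?K ` {..<i}) \<subseteq> ?U"
    by (rule linear_image_span_subset[OF x]) (auto intro!: span_base image_eqI[of _ _ "Suc _"])
  moreover have "span (?K ` {..<i}) \<subseteq> ?U"
    by (rule span_mono) auto
  ultimately have "x u \<in> ?U" "u' \<in> ?U"
    by auto
  moreover have "?K i \<in> ?U"
    by (simp add: span_base)
  moreover have "a (?K (Suc i)) - scale (\<mu> a) (?K (Suc i))
      = u' + scale (\<mu> (commutator a x)) (?K i) + x u"
    by (simp add: u_def u'_def commutator_def linear_diff[OF x] linear_scale[OF x])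
  ultimately show ?case
    by (simp add: span_add span_scale)
qed

end

locale acf0_space = endo_space scale + finite_dimensional_vector_space scale Basis
  for scale :: "'k::{alg_closed_field, field_char_0} \<Rightarrow> 'v::ab_group_add \<Rightarrow> 'v"
    and Basis :: "'v set"
begin

lemma krylov_basis:
  fixes T :: "'v \<Rightarrow> 'v"
  assumes "w \<noteq> 0"
  obtains d where "d > 0" "independent ((\<lambda>i. (T ^^ i) w) ` {..<d})"
    "inj_on (\<lambda>i. (T ^^ i) w) {..<d}" "(T ^^ d) w \<in> span ((\<lambda>i. (T ^^ i) w) ` {..<d})"
proof -
  let ?K = "\<lambda>i. (T ^^ i) w"
  let ?dependent = "\<lambda>d. ?K d \<in> span (?K ` {..<d})"
  have "\<exists>d. ?dependent d"
  proof (rule ccontr)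
    assume "\<nexists>d. ?dependent d"
    then have "independent (?K ` {..<Suc (card Basis)}) \<and> inj_on ?K {..<Suc (card Basis)}"
      by (intro krylov_independent) auto
    moreover have "card (?K ` {..<Suc (card Basis)}) \<le> card Basis"
      using calculation independent_span_bound[OF finite_Basis] span_Basis by auto
    ultimately show False
      by (simp add: card_image)
  qed
  define d where "d = (LEAST d. ?dependent d)"
  have dep: "?dependent d"
    unfolding d_def by (rule LeastI_ex) fact
  have "\<not> ?dependent i" if "i < d" for i
    using not_less_Least that unfolding d_def by blast
  then have "independent (?K ` {..<d}) \<and> inj_on ?K {..<d}"
    by (intro krylov_independent) auto
  moreover have "d \<noteq> 0"
  proof
    assume "d = 0"
    with dep have "w \<in> span {}"
      by simp
    with assms show False
      by simp
  qed
  ultimately show ?thesis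
    using dep that by blast
qed

lemma eigenvector_of_annihilating_poly:
  assumes T: "linear_map T" "subspace W" "T ` W \<subseteq> W" and u: "u \<in> W" "u \<noteq> 0"
  shows "p \<noteq> 0 \<Longrightarrow> poly_apply T p u = 0 \<Longrightarrow> \<exists>z\<in>W. z \<noteq> 0 \<and> (\<exists>c. T z = scale c z)"
proof (induction "degree p" arbitrary: p rule: less_induct)
  case less
  show ?case
  proof (cases "degree p = 0")
    case True
    then have "poly_apply T p u = scale (coeff p 0) u"
      by (simp add: poly_apply_def)
    moreover have "coeff p 0 \<noteq> 0"
      using True less.prems(1) by (metis leading_coeff_0_iff)
    ultimately show ?thesis
      using less.prems(2) u(2) by simp
  next
    case False
    then obtain r where "poly p r = 0"
      using alg_closed_imp_poly_has_root by blast
    define q where "q = synthetic_div p r"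
    have p: "p = [:-r, 1:] * q"
      using synthetic_div_correct'[of r p] \<open>poly p r = 0\<close> by (simp add: q_def)
    define z where "z = poly_apply T q u"
    have Tz: "T z = scale r z"
      using less.prems(2) poly_apply_linear_factor[OF T(1), of r q u] p by (simp add: z_def)
    show ?thesis
    proof (cases "z = 0")
      case True
      have "q \<noteq> 0"
        using p less.prems(1) by auto
      moreover have "degree q < degree p"
        using \<open>degree p \<noteq> 0\<close> by (simp add: q_def degree_synthetic_div)
      ultimately show ?thesis
        using less.hyps True by (simp add: z_def)
    next
      case False
      moreover have "z \<in> W"
        unfolding z_def by (rule poly_apply_in_subspace[OF T(2,3) u(1)])
      ultimately show ?thesis
        using Tz by blast
    qed
  qed
qed

lemma eigenvector_exists:
  assumes T: "linear_map T" "subspace W" "T ` W \<subseteq> W" and w: "w \<in> W" "w \<noteq> 0"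
  shows "\<exists>z\<in>W. z \<noteq> 0 \<and> (\<exists>c. T z = scale c z)"
proof -
  let ?K = "\<lambda>i. (T ^^ i) w"
  obtain d where d: "independent (?K ` {..<d})" "inj_on ?K {..<d}" "?K d \<in> span (?K ` {..<d})"
    using krylov_basis[OF w(2)] by metis
  define a where "a i = representation (?K ` {..<d}) (?K d) (?K i)" for i
  have "?K d = (\<Sum>b\<in>?K ` {..<d}. scale (representation (?K ` {..<d}) (?K d) b) b)"
    using sum_representation_eq[OF d(1,3) _ order_refl] by simp
  also have "\<dots> = (\<Sum>i<d. scale (a i) (?K i))"
    by (simp add: sum.reindex[OF d(2)] a_def)
  finally have a: "?K d = (\<Sum>i<d. scale (a i) (?K i))" .
  define p where "p = monom 1 d - (\<Sum>i<d. monom (a i) i)"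
  have coeff_p: "coeff p j = (if j = d then 1 else 0) - (if j < d then a j else 0)" for j
    by (simp add: p_def coeff_sum)
  have "degree p \<le> d"
    unfolding p_def
    by (intro degree_diff_le degree_sum_le) (auto intro: order.trans[OF degree_monom_le])
  then have "poly_apply T p w
      = (\<Sum>j\<le>d. scale (if j = d then 1 else 0) (?K j)) - (\<Sum>j\<le>d. scale (if j < d then a j else 0) (?K j))"
    by (simp add: poly_apply_eq_sum coeff_p scale_left_diff_distrib sum_subtractf)
  also have "\<dots> = ?K d - (\<Sum>j<d. scale (a j) (?K j))"
    by (simp add: if_distrib[of "\<lambda>c. scale c _"] lessThan_Suc_atMost[symmetric] cong: if_cong)
  finally have "poly_apply T p w = 0"
    using a by simp
  moreover have "p \<noteq> 0"
    using coeff_p[of d] by auto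
  ultimately show ?thesis
    by (intro eigenvector_of_annihilating_poly[OF T w])
qed

lemma common_eigenvector_commuting:
  assumes "\<forall>T\<in>F. linear_map T \<and> T ` W \<subseteq> W"
    and "\<forall>S\<in>F. \<forall>T\<in>F. \<forall>w\<in>W. S (T w) = T (S w)"
    and "subspace W" "W \<noteq> {0}"
  shows "\<exists>v\<in>W. v \<noteq> 0 \<and> (\<forall>T\<in>F. \<exists>c. T v = scale c v)"
  using assms
proof (induction "dim W" arbitrary: W rule: less_induct)
  case less
  obtain w where w: "w \<in> W" "w \<noteq> 0"
    using less.prems(3,4) subspace_0 by blast
  show ?case
  proof (cases "\<forall>T\<in>F. \<exists>c. \<forall>w\<in>W. T w = scale c w")
    case True
    with w show ?thesis by blast
  next
    case False
    then obtain T where T: "T \<in> F" "\<nexists>c. \<forall>w\<in>W. T w = scale c w"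
      by blast
    have "linear_map T" "T ` W \<subseteq> W"
      using T(1) less.prems(1) by auto
    then obtain z c where z: "z \<in> W" "z \<noteq> 0" "T z = scale c z"
      using eigenvector_exists[OF _ less.prems(3) _ w] by blast
    define E where "E = W \<inter> {w. T w = scale c w}"
    have "subspace E"
      unfolding E_def by (intro subspace_inter less.prems(3) subspace_eigenspace) fact
    moreover have "E \<subset> W"
      using T(2) by (auto simp: E_def)
    moreover have "span E = E" "span W = W"
      using \<open>subspace E\<close> less.prems(3) by simp_all
    ultimately have "dim E < dim W"
      using dim_psubset[of E W] by (simp only:)
    moreover have "\<forall>S\<in>F. linear_map S \<and> S ` E \<subseteq> E"
    proof
      fix S assume "S \<in> F"
      then have "linear_map S" "S ` W \<subseteq> W" "\<forall>w\<in>W. S (T w) = T (S w)"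
        using less.prems(1,2) T(1) by auto
      then show "linear_map S \<and> S ` E \<subseteq> E"
        unfolding E_def using commuting_eigenspace_invariant by blast
    qed
    moreover have "\<forall>S\<in>F. \<forall>T\<in>F. \<forall>w\<in>E. S (T w) = T (S w)"
      using less.prems(2) by (auto simp: E_def)
    moreover have "E \<noteq> {0}"
      using z by (auto simp: E_def)
    ultimately obtain v where "v \<in> E" "v \<noteq> 0" "\<forall>T\<in>F. \<exists>c. T v = scale c v"
      using less.hyps[of E] \<open>subspace E\<close> by blast
    then show ?thesis
      by (auto simp: E_def)
  qed
qed

lemma commutator_scalar_eq_0:
  assumes S: "linear_map S" "S ` W \<subseteq> W" and T: "linear_map T" "T ` W \<subseteq> W"
    and W: "subspace W" "W \<noteq> {0}"
    and scalar: "\<forall>w\<in>W. commutator S T w = scale c w"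
  shows "c = 0"
proof -
  obtain B where B: "B \<subseteq> W" "independent B" "W \<subseteq> span B"
    by (meson basis_exists)
  have "finite B"
    using finiteI_independent[OF B(2)] .
  have "span B = W"
    using B(1,3) W(1) by (simp add: span_subspace)
  have "B \<noteq> {}"
  proof
    assume "B = {}"
    with B(3) have "W \<subseteq> {0}"
      by simp
    with W show False
      using subspace_0[OF W(1)] by auto
  qed
  have "S ` B \<subseteq> span B" "T ` B \<subseteq> span B"
    using B(1) S(2) T(2) \<open>span B = W\<close> by blast+
  then have "trace_on B (commutator S T) = 0"
    by (intro trace_on_commutator[OF B(2) \<open>finite B\<close> S(1) _ T(1)])
  moreover have "commutator S T b - scale c b \<in> span (B - {b})" if "b \<in> B" for b
    using scalar B(1) that by (simp add: subset_iff span_zero)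
  then have "trace_on B (commutator S T) = of_nat (card B) * c"
    by (intro trace_on_triangular[OF B(2) \<open>finite B\<close>])
  ultimately show ?thesis
    using \<open>finite B\<close> \<open>B \<noteq> {}\<close> by simp
qed

(* Lie's invariance lemma: on the x-cyclic subspace of w the operator [a, x] is triangular with
   diagonal entry mu [a, x], so its trace is both d * mu [a, x] and, as a commutator, zero. *)
lemma weight_preserved:
  assumes F: "\<forall>a\<in>F. linear_map a" and x: "linear_map x" and ideal: "\<forall>a\<in>F. commutator a x \<in> F"
    and w: "\<forall>a\<in>F. a w = scale (\<mu> a) w" and a: "a \<in> F"
  shows "a (x w) = scale (\<mu> a) (x w)"
proof (cases "w = 0")
  case True
  then show ?thesis
    using F a x by (simp add: linear_0)
next
  case False
  let ?K = "\<lambda>i. (x ^^ i) w"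
  obtain d where d: "d > 0" "independent (?K ` {..<d})" "inj_on ?K {..<d}"
    "?K d \<in> span (?K ` {..<d})"
    by (rule krylov_basis[OF False])
  have "b (?K i) - scale (\<mu> b) (?K i) \<in> span (?K ` {..<d} - {?K i})" if "b \<in> F" "i < d" for b i
  proof -
    have "span (?K ` {..<i}) \<subseteq> span (?K ` {..<d} - {?K i})"
      using d(3) that(2) by (intro span_mono) (auto dest: inj_onD)
    then show ?thesis
      using krylov_triangular[OF x ideal w that(1)] by blast
  qed
  then have triangular: "b y - scale (\<mu> b) y \<in> span (?K ` {..<d} - {y})"
    if "b \<in> F" "y \<in> ?K ` {..<d}" for b y
    using that by blast
  have "of_nat d * \<mu> (commutator a x) = trace_on (?K ` {..<d}) (commutator a x)"
    using trace_on_triangular[OF d(2) _ triangular] ideal a d(3) by (simp add: card_image)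
  also have "\<dots> = 0"
    using triangular_image_subset_span[OF triangular] krylov_image_subset_span[OF d(4)] F a x
    by (intro trace_on_commutator[OF d(2)]) auto
  finally have "\<mu> (commutator a x) = 0"
    using d(1) by simp
  moreover have "commutator a x w = scale (\<mu> (commutator a x)) w"
    using w ideal a by blast
  ultimately have "a (x w) = x (a w)"
    by (simp add: commutator_def)
  also have "a w = scale (\<mu> a) w"
    using w a by blast
  finally show ?thesis
    by (simp add: linear_scale[OF x])
qed

lemma common_weight_subspace:
  assumes L: "\<forall>x\<in>L. linear_map x" and "F \<subseteq> L" and ideal: "\<forall>a\<in>F. \<forall>x\<in>L. commutator a x \<in> F"
    and W: "subspace W" "W \<noteq> {0}" "\<forall>x\<in>L. x ` W \<subseteq> W"
    and comm: "\<forall>a\<in>F. \<forall>b\<in>F. \<forall>w\<in>W. a (b w) = b (a w)"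
  shows "\<exists>W'. subspace W' \<and> W' \<noteq> {0} \<and> (\<forall>x\<in>L. x ` W' \<subseteq> W') \<and>
    (\<forall>a\<in>F. \<exists>c. \<forall>w\<in>W'. a w = scale c w)"
proof -
  have F: "\<forall>a\<in>F. linear_map a"
    using L \<open>F \<subseteq> L\<close> by blast
  have "\<forall>a\<in>F. linear_map a \<and> a ` W \<subseteq> W"
    using F W(3) \<open>F \<subseteq> L\<close> by blast
  then obtain v where v: "v \<in> W" "v \<noteq> 0" "\<forall>a\<in>F. \<exists>c. a v = scale c v"
    using common_eigenvector_commuting[OF _ comm W(1,2)] by blast
  define \<mu> where "\<mu> a = (SOME c. a v = scale c v)" for a
  have \<mu>: "a v = scale (\<mu> a) v" if "a \<in> F" for a
  proof -
    have "\<exists>c. a v = scale c v"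
      using v(3) that by blast
    then show ?thesis
      unfolding \<mu>_def by (rule someI_ex)
  qed
  define W' where "W' = W \<inter> (\<Inter>a\<in>F. {w. a w = scale (\<mu> a) w})"
  have "subspace W'"
    unfolding W'_def using F by (intro subspace_inter W(1) subspace_Int subspace_eigenspace) auto
  moreover have "W' \<noteq> {0}"
  proof -
    have "v \<in> W'"
      unfolding W'_def using v(1) \<mu> by blast
    with v(2) show ?thesis
      by blast
  qed
  moreover have "\<forall>x\<in>L. x ` W' \<subseteq> W'"
  proof (intro ballI image_subsetI)
    fix x u assume x: "x \<in> L" and u: "u \<in> W'"
    have "linear_map x" "\<forall>a\<in>F. commutator a x \<in> F"
      using L ideal x by auto
    moreover have "\<forall>a\<in>F. a u = scale (\<mu> a) u"
      using u by (simp add: W'_def)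
    ultimately have "a (x u) = scale (\<mu> a) (x u)" if "a \<in> F" for a
      using weight_preserved[OF F _ _ _ that] by blast
    moreover have "x u \<in> W"
      using W(3) x u by (auto simp: W'_def)
    ultimately show "x u \<in> W'"
      by (simp add: W'_def)
  qed
  moreover have "\<forall>a\<in>F. \<exists>c. \<forall>w\<in>W'. a w = scale c w"
    unfolding W'_def by blast
  ultimately show ?thesis
    by blast
qed

lemma common_eigenvector_solvable_chain:
  fixes C :: "nat \<Rightarrow> ('v \<Rightarrow> 'v) set"
  assumes linear: "\<forall>x\<in>C 0. linear_map x" and sub: "\<And>k. C k \<subseteq> C 0"
    and ideal: "\<And>k. \<forall>a\<in>C k. \<forall>x\<in>C 0. commutator a x \<in> C k"
    and derived: "\<And>k. \<forall>a\<in>C k. \<forall>b\<in>C k. commutator a b \<in> C (Suc k)"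
    and abelian: "\<forall>a\<in>C m. \<forall>b\<in>C m. \<forall>v. a (b v) = b (a v)"
    and nontrivial: "(UNIV :: 'v set) \<noteq> {0}"
  shows "\<exists>v. v \<noteq> 0 \<and> (\<forall>x\<in>C 0. \<exists>c. x v = scale c v)"
proof -
  have "\<exists>W. subspace W \<and> W \<noteq> {0} \<and> (\<forall>x\<in>C 0. x ` W \<subseteq> W) \<and>
      (\<forall>a\<in>C (m - j). \<exists>c. \<forall>w\<in>W. a w = scale c w)" if "j \<le> m" for j
    using that
  proof (induction j)
    case 0
    show ?case
      using common_weight_subspace[OF linear sub ideal subspace_UNIV nontrivial] abelian by auto
  next
    case (Suc j)
    then obtain W where W: "subspace W" "W \<noteq> {0}" "\<forall>x\<in>C 0. x ` W \<subseteq> W"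
      "\<forall>a\<in>C (m - j). \<exists>c. \<forall>w\<in>W. a w = scale c w"
      by auto
    define k where "k = m - Suc j"
    have Suc_k: "Suc k = m - j"
      using Suc.prems by (simp add: k_def)
    have "\<forall>a\<in>C k. \<forall>b\<in>C k. \<forall>w\<in>W. a (b w) = b (a w)"
    proof (intro ballI)
      fix a b w assume a: "a \<in> C k" and b: "b \<in> C k" and w: "w \<in> W"
      obtain c where c: "\<forall>w\<in>W. commutator a b w = scale c w"
        using W(4) derived a b Suc_k by metis
      have "a \<in> C 0" "b \<in> C 0"
        using sub[of k] a b by blast+
      then have "linear_map a" "linear_map b" "a ` W \<subseteq> W" "b ` W \<subseteq> W"
        using linear W(3) by auto
      then have "c = 0"
        using commutator_scalar_eq_0[OF _ _ _ _ W(1,2) c] by blast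
      with c w show "a (b w) = b (a w)"
        by (simp add: commutator_def)
    qed
    then show ?case
      using common_weight_subspace[OF linear sub ideal W(1,2,3)] by (simp add: k_def)
  qed
  from this[of m] obtain W where W: "subspace W" "W \<noteq> {0}"
    "\<forall>x\<in>C 0. \<exists>c. \<forall>w\<in>W. x w = scale c w"
    by auto
  then obtain v where "v \<in> W" "v \<noteq> 0"
    using subspace_0 by blast
  with W(3) show ?thesis
    by blast
qed

end

locale poisson_n_lie = endo_space scale
  for scale :: "'k::field \<Rightarrow> 'v::ab_group_add \<Rightarrow> 'v" +
  fixes n :: nat and mul :: "'v \<Rightarrow> 'v \<Rightarrow> 'v" and br :: "'v list \<Rightarrow> 'v"
  assumes n_ge_2: "n \<ge> 2" and poisson: "poisson_n_lie_algebra scale n mul br"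
begin

lemma mul_add_left: "mul (x + y) z = mul x z + mul y z"
  and mul_scale_left: "mul (scale c x) y = scale c (mul x y)"
  and mul_commute: "mul x y = mul y x"
  and mul_assoc: "mul (mul x y) z = mul x (mul y z)"
  using poisson unfolding poisson_n_lie_algebra_def comm_assoc_algebra_def by blast+

lemma mul_add_right: "mul z (x + y) = mul z x + mul z y"
  by (simp add: mul_commute[of z] mul_add_left)

lemma mul_scale_right: "mul y (scale c x) = scale c (mul y x)"
  by (simp add: mul_commute[of y] mul_scale_left)

lemma linear_mul: "linear_map (mul z)"
  by (simp add: Vector_Spaces.linear_iff vector_space_axioms mul_add_right mul_scale_right)

lemma br_update_add:
    "length zs = n \<Longrightarrow> i < n \<Longrightarrow> br (zs[i := a + b]) = br (zs[i := a]) + br (zs[i := b])"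
  and br_update_scale:
    "length zs = n \<Longrightarrow> i < n \<Longrightarrow> br (zs[i := scale c a]) = scale c (br (zs[i := a]))"
  and br_swap: "length zs = n \<Longrightarrow> i < n \<Longrightarrow> j < n \<Longrightarrow> i \<noteq> j \<Longrightarrow>
    br (zs[i := zs ! j, j := zs ! i]) = - br zs"
  and br_fundamental: "length xs = n - 1 \<Longrightarrow> length ys = n \<Longrightarrow>
    br (xs @ [br ys]) = (\<Sum>i<n. br (ys[i := br (xs @ [ys ! i])]))"
  and br_leibniz: "length xs = n - 1 \<Longrightarrow> br (mul y z # xs) = mul y (br (z # xs)) + mul z (br (y # xs))"
  using poisson by (simp_all add: poisson_n_lie_algebra_def n_multilinear_def skew_symmetric_def
      fundamental_identity_def leibniz_rule_def)

lemma br_update_0: "length zs = n \<Longrightarrow> i < n \<Longrightarrow> br (zs[i := 0]) = 0"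
  using br_update_scale[of zs i 0 0] by simp

lemma br_swap_in_subspace:
  assumes "subspace X" "length zs = n" "i < n" "j < n"
  shows "br (zs[i := zs ! j, j := zs ! i]) \<in> X \<longleftrightarrow> br zs \<in> X"
proof (cases "i = j")
  case False
  then show ?thesis
    using br_swap[OF assms(2-4) False] subspace_neg[OF assms(1)] by (metis minus_minus)
qed simp

(* br_op ys is the operator Q_ys of the paper; P_x is just mul x. *)
definition br_op :: "'v list \<Rightarrow> 'v \<Rightarrow> 'v" where
  "br_op ys v = br (ys @ [v])"

lemma linear_br_op:
  assumes "length ys = n - 1"
  shows "linear_map (br_op ys)"
proof -
  have upd: "(ys @ [0])[n - 1 := u] = ys @ [u]" for u
    using assms by (simp add: list_update_append)
  have len: "length (ys @ [0]) = n" "n - 1 < n"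
    using assms n_ge_2 by auto
  have "br (ys @ [u + u']) = br (ys @ [u]) + br (ys @ [u'])" for u u'
    using br_update_add[OF len, of u u'] unfolding upd .
  moreover have "br (ys @ [scale c u]) = scale c (br (ys @ [u]))" for c u
    using br_update_scale[OF len, of c u] unfolding upd .
  ultimately show ?thesis
    by (simp add: Vector_Spaces.linear_iff vector_space_axioms br_op_def)
qed

lemma br_swap_first_last:
  assumes "length xs = n - 2"
  shows "br (a # xs @ [b]) = - br (b # xs @ [a])"
proof -
  have last: "n - 1 = Suc (length xs)"
    using assms n_ge_2 by simp
  have "(a # xs @ [b])[0 := (a # xs @ [b]) ! (n - 1), n - 1 := (a # xs @ [b]) ! 0] = b # xs @ [a]"
    unfolding last by (simp add: nth_append list_update_append)
  then show ?thesis
    using br_swap[of "a # xs @ [b]" 0 "n - 1"] assms n_ge_2 by auto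
qed

lemma br_leibniz_last:
  assumes "length xs = n - 1"
  shows "br (xs @ [mul y z]) = mul y (br (xs @ [z])) + mul z (br (xs @ [y]))"
proof -
  obtain x rest where xs: "xs = x # rest"
    using assms n_ge_2 by (cases xs) auto
  have rest: "length rest = n - 2" "length (rest @ [x]) = n - 1"
    using assms n_ge_2 xs by auto
  have "br (xs @ [mul y z]) = - br (mul y z # rest @ [x])"
    unfolding xs using br_swap_first_last[OF rest(1), of x "mul y z"] by simp
  also have "\<dots> = mul y (- br (z # rest @ [x])) + mul z (- br (y # rest @ [x]))"
    by (simp add: br_leibniz[OF rest(2)] linear_neg[OF linear_mul])
  also have "\<dots> = mul y (br (xs @ [z])) + mul z (br (xs @ [y]))"
    unfolding xs using br_swap_first_last[OF rest(1), of x] by simp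
  finally show ?thesis .
qed

abbreviation derived :: "nat \<Rightarrow> 'v set" where
  "derived k \<equiv> derived_series scale n mul br k"

lemma subspace_derived: "subspace (derived k)"
  by (cases k) auto

declare derived_series.simps(2) [simp del]

lemma br_generator_in_derived:
  "a \<in> derived k \<Longrightarrow> b \<in> derived k \<Longrightarrow> length cs = n - 2 \<Longrightarrow> br (a # b # cs) \<in> derived (Suc k)"
  by (simp only: derived_series.simps(2)) (rule span_base, blast)

lemma mul_in_derived: "a \<in> derived k \<Longrightarrow> b \<in> derived k \<Longrightarrow> mul a b \<in> derived (Suc k)"
  by (simp only: derived_series.simps(2)) (rule span_base, blast)

lemma br_last_generator_in_derived:
  assumes IH: "\<And>u. u \<in> derived k \<Longrightarrow> br (xs @ [u]) \<in> derived k"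
    and xs: "length xs = n - 1" and ab: "a \<in> derived k" "b \<in> derived k" and cs: "length cs = n - 2"
  shows "br (xs @ [br (a # b # cs)]) \<in> derived (Suc k)"
proof -
  have "br ((a # b # cs)[i := br (xs @ [(a # b # cs) ! i])]) \<in> derived (Suc k)" for i
  proof (cases i)
    case 0
    then show ?thesis
      using IH ab cs by (simp add: br_generator_in_derived)
  next
    case (Suc j)
    then show ?thesis
      using IH ab cs by (cases j) (simp_all add: br_generator_in_derived)
  qed
  then show ?thesis
    using br_fundamental[OF xs, of "a # b # cs"] cs n_ge_2
    by (simp add: subspace_sum[OF subspace_derived])
qed

lemma br_last_in_derived: "length xs = n - 1 \<Longrightarrow> u \<in> derived k \<Longrightarrow> br (xs @ [u]) \<in> derived k"
proof (induction k arbitrary: xs u)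
  case (Suc k)
  define G where "G = {br (a # b # cs) | a b cs. a \<in> derived k \<and> b \<in> derived k \<and> length cs = n - 2}
    \<union> {mul a b | a b. a \<in> derived k \<and> b \<in> derived k}"
  have derived_Suc: "derived (Suc k) = span G"
    by (simp add: G_def derived_series.simps(2))
  have IH: "br (xs @ [u]) \<in> derived k" if "u \<in> derived k" for u
    using Suc.IH[OF Suc.prems(1) that] .
  have "br_op xs s \<in> derived (Suc k)" if "s \<in> G" for s
  proof -
    from that consider (br) a b cs where "s = br (a # b # cs)"
        "a \<in> derived k" "b \<in> derived k" "length cs = n - 2"
      | (mul) a b where "s = mul a b" "a \<in> derived k" "b \<in> derived k"
      unfolding G_def by blast
    then show ?thesis
    proof cases
      case br
      then show ?thesis
        unfolding br_op_def using br_last_generator_in_derived[OF IH Suc.prems(1)] by simp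
    next
      case mul
      then have "mul a (br (xs @ [b])) \<in> derived (Suc k)" "mul b (br (xs @ [a])) \<in> derived (Suc k)"
        using IH mul_in_derived by blast+
      then show ?thesis
        unfolding br_op_def mul(1) br_leibniz_last[OF Suc.prems(1)]
        by (rule subspace_add[OF subspace_derived])
    qed
  qed
  then have "br_op xs ` span G \<subseteq> span G"
    using linear_image_span_subset[OF linear_br_op[OF Suc.prems(1)]] derived_Suc by blast
  then show ?case
    using Suc.prems(2) derived_Suc by (auto simp: br_op_def)
qed simp

lemma br_in_derived:
  assumes zs: "length zs = n" and i: "i < n" "zs ! i \<in> derived k"
  shows "br zs \<in> derived k"
proof -
  define zs' where "zs' = zs[i := zs ! (n - 1), n - 1 := zs ! i]"
  have len: "length zs' = n" and last: "zs' ! (n - 1) = zs ! i"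
    using zs n_ge_2 by (simp_all add: zs'_def)
  then obtain xs where "zs' = xs @ [zs ! i]" "length xs = n - 1"
    using n_ge_2 by (cases zs' rule: rev_cases) (auto simp: nth_append)
  then have "br zs' \<in> derived k"
    using br_last_in_derived[OF _ i(2)] by simp
  then show ?thesis
    using br_swap_in_subspace[OF subspace_derived zs i(1), of "n - 1"] n_ge_2
    by (simp add: zs'_def)
qed

lemma br_in_derived_Suc:
  assumes zs: "length zs = n" and ij: "i < n" "j < n" "i \<noteq> j"
    and derived: "zs ! i \<in> derived k" "zs ! j \<in> derived k"
  shows "br zs \<in> derived (Suc k)"
proof -
  define zs1 where "zs1 = zs[0 := zs ! i, i := zs ! 0]"
  define j1 where "j1 = (if j = 0 then i else j)" \<comment> \<open>position of the j-th entry in zs1\<close>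
  define zs2 where "zs2 = zs1[1 := zs1 ! j1, j1 := zs1 ! 1]"
  have len: "length zs1 = n" "length zs2 = n"
    using zs by (simp_all add: zs1_def zs2_def)
  have j1: "j1 < n" "j1 \<noteq> 0" "zs1 ! j1 = zs ! j"
    using ij zs by (auto simp: j1_def zs1_def nth_list_update)
  have "zs2 ! 0 = zs ! i" "zs2 ! 1 = zs ! j"
    using j1 len ij n_ge_2 by (auto simp: zs2_def zs1_def nth_list_update)
  moreover obtain a b cs where "zs2 = a # b # cs"
    using len(2) n_ge_2 by (metis Suc_le_length_iff numeral_2_eq_2)
  ultimately have "br zs2 \<in> derived (Suc k)"
    using derived len(2) by (simp add: br_generator_in_derived)
  then have "br zs1 \<in> derived (Suc k)"
    using br_swap_in_subspace[OF subspace_derived len(1), of 1 j1] j1 n_ge_2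
    by (simp add: zs2_def)
  then show ?thesis
    using br_swap_in_subspace[OF subspace_derived zs, of 0 i] ij n_ge_2
    by (simp add: zs1_def)
qed

lemma commutator_br_op_br_op:
  assumes x: "length x = n - 1" and y: "length y = n - 1"
  shows "commutator (br_op x) (br_op y) = (\<lambda>v. \<Sum>i<n - 1. br_op (y[i := br (x @ [y ! i])]) v)"
proof
  fix v
  have n: "n = Suc (n - 1)"
    using n_ge_2 by simp
  have "br (x @ [br (y @ [v])]) = (\<Sum>i<n. br ((y @ [v])[i := br (x @ [(y @ [v]) ! i])]))"
    using br_fundamental[OF x] y n_ge_2 by simp
  also have "\<dots> = (\<Sum>i<n - 1. br ((y @ [v])[i := br (x @ [(y @ [v]) ! i])]))
      + br ((y @ [v])[n - 1 := br (x @ [(y @ [v]) ! (n - 1)])])"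
    by (subst n) (simp del: Suc_pred')
  also have "\<dots> = (\<Sum>i<n - 1. br_op (y[i := br (x @ [y ! i])]) v) + br_op y (br_op x v)"
    using y by (simp add: br_op_def nth_append list_update_append)
  finally show "commutator (br_op x) (br_op y) v = (\<Sum>i<n - 1. br_op (y[i := br (x @ [y ! i])]) v)"
    by (simp add: commutator_def br_op_def)
qed

lemma commutator_br_op_mul: "length x = n - 1 \<Longrightarrow> commutator (br_op x) (mul z) = mul (br (x @ [z]))"
  by (rule ext) (simp add: commutator_def br_op_def br_leibniz_last mul_commute)

lemma commutator_mul_br_op: "length x = n - 1 \<Longrightarrow> commutator (mul z) (br_op x) = mul (- br (x @ [z]))"
  by (rule ext) (simp add: commutator_def br_op_def br_leibniz_last mul_commute linear_neg[OF linear_mul])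

lemma commutator_mul_mul: "commutator (mul z) (mul w) = (\<lambda>v. 0)"
  by (rule ext) (simp add: commutator_def mul_assoc[symmetric] mul_commute[of z w])

definition br_ops :: "nat \<Rightarrow> ('v \<Rightarrow> 'v) set" where
  "br_ops k = {br_op ys | ys i. length ys = n - 1 \<and> i < n - 1 \<and> ys ! i \<in> derived k}"

definition br_ops_into :: "nat \<Rightarrow> ('v \<Rightarrow> 'v) set" where
  "br_ops_into k = {br_op ys | ys. length ys = n - 1 \<and> range (br_op ys) \<subseteq> derived k}"

lemma br_ops_subset_br_ops_into: "br_ops k \<subseteq> br_ops_into k"
  unfolding br_ops_def br_ops_into_def br_op_def
  by (force intro: br_in_derived simp: nth_append)

lemma br_op_in_br_ops_into_Suc:
  assumes "length ys = n - 1" "i < n - 1" "j < n - 1" "i \<noteq> j"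
    and "ys ! i \<in> derived k" "ys ! j \<in> derived k"
  shows "br_op ys \<in> br_ops_into (Suc k)"
  unfolding br_ops_into_def br_op_def
  using assms by (force intro: br_in_derived_Suc[of _ i j] simp: nth_append)

lemma commutator_br_ops_into:
  assumes "g \<in> br_ops_into r" and y: "length y = n - 1"
  shows "commutator g (br_op y) \<in> add_closure (br_ops r)"
proof -
  obtain x where x: "g = br_op x" "length x = n - 1" "range (br_op x) \<subseteq> derived r"
    using assms(1) unfolding br_ops_into_def by blast
  have "br_op (y[i := br (x @ [y ! i])]) \<in> br_ops r" if "i < n - 1" for i
    using x y that unfolding br_ops_def br_op_def by force
  then show ?thesis
    unfolding x(1) commutator_br_op_br_op[OF x(2) y] by (intro add_closure_sum) auto
qed

lemma commutator_br_ops: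
  assumes "g \<in> br_ops k" "h \<in> br_ops k"
  shows "commutator g h \<in> add_closure (br_ops_into (Suc k))"
proof -
  obtain x p where x: "g = br_op x" "length x = n - 1" "p < n - 1" "x ! p \<in> derived k"
    using assms(1) by (auto simp: br_ops_def)
  obtain y q where y: "h = br_op y" "length y = n - 1" "q < n - 1" "y ! q \<in> derived k"
    using assms(2) by (auto simp: br_ops_def)
  have "br_op (y[i := br (x @ [y ! i])]) \<in> br_ops_into (Suc k)" if i: "i < n - 1" for i
  proof (cases "i = q")
    case True
    then have "br (x @ [y ! i]) \<in> derived (Suc k)"
      using x y n_ge_2 by (intro br_in_derived_Suc[of _ p "n - 1"]) (auto simp: nth_append)
    then have "br_op (y[i := br (x @ [y ! i])]) \<in> br_ops (Suc k)"
      using y(2) i unfolding br_ops_def by force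
    then show ?thesis
      using br_ops_subset_br_ops_into by blast
  next
    case False
    have "br (x @ [y ! i]) \<in> derived k"
      using x n_ge_2 by (intro br_in_derived[of _ p]) (auto simp: nth_append)
    then show ?thesis
      using y i False by (intro br_op_in_br_ops_into_Suc[of _ i q]) auto
  qed
  then show ?thesis
    unfolding x(1) y(1) commutator_br_op_br_op[OF x(2) y(2)] by (intro add_closure_sum) auto
qed

(* Commuting two operators of br_ops k yields summands with an entry in derived (Suc k) or with
   two entries in derived k; both map into derived (Suc k). Commuting with such an operator yields
   summands with an entry in derived (Suc k) again. Hence two steps per derived term. *)
definition op_series :: "nat \<Rightarrow> ('v \<Rightarrow> 'v) set" where
  "op_series j = (if even j then br_ops (j div 2) else br_ops_into (Suc (j div 2))) \<union> range mul"

lemma op_series_0: "op_series 0 = {br_op ys | ys. length ys = n - 1} \<union> range mul"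
proof -
  have "br_ops 0 = {br_op ys | ys. length ys = n - 1}"
    using n_ge_2 unfolding br_ops_def by (auto intro!: exI[of _ 0])
  then show ?thesis
    by (simp add: op_series_def)
qed

lemma br_ops_subset_op_series: "br_ops (Suc j div 2) \<subseteq> op_series j"
  using br_ops_subset_br_ops_into by (auto simp: op_series_def elim: oddE)

lemma op_series_subset_br_ops_into: "op_series j \<subseteq> br_ops_into (Suc j div 2) \<union> range mul"
  using br_ops_subset_br_ops_into by (auto simp: op_series_def elim: oddE)

lemma op_series_subset_op_series_0: "op_series j \<subseteq> op_series 0"
proof -
  have "br_ops_into (Suc j div 2) \<subseteq> {br_op ys | ys. length ys = n - 1}"
    unfolding br_ops_into_def by blast
  then show ?thesis
    using op_series_subset_br_ops_into unfolding op_series_0 by blast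
qed

lemma range_mul_subset_op_series: "range mul \<subseteq> op_series j"
  by (simp add: op_series_def)

lemma linear_op_series:
  assumes "g \<in> op_series j"
  shows "linear_map g"
proof -
  have "g \<in> op_series 0"
    using assms op_series_subset_op_series_0 by blast
  then consider ys where "g = br_op ys" "length ys = n - 1" | z where "g = mul z"
    unfolding op_series_0 by blast
  then show ?thesis
    by cases (simp_all add: linear_br_op linear_mul)
qed

lemma commutator_mul_op_series_0:
  assumes "g \<in> op_series 0" "h \<in> op_series 0" "g \<in> range mul \<or> h \<in> range mul"
  shows "commutator g h \<in> add_closure (range mul)"
proof -
  consider z w where "g = mul z" "h = mul w"
    | x z where "g = br_op x" "length x = n - 1" "h = mul z"
    | x z where "g = mul z" "h = br_op x" "length x = n - 1"
    using assms unfolding op_series_0 by blast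
  then show ?thesis
    by cases (simp_all add: commutator_mul_mul commutator_br_op_mul commutator_mul_br_op
        add_closure.zero add_closure.base)
qed

lemma commutator_op_series_ideal:
  assumes g: "g \<in> op_series j" and h: "h \<in> op_series 0"
  shows "commutator g h \<in> add_closure (op_series j)"
proof (cases "g \<in> range mul \<or> h \<in> range mul")
  case True
  have "g \<in> op_series 0"
    using g op_series_subset_op_series_0 by blast
  then have "commutator g h \<in> add_closure (range mul)"
    using commutator_mul_op_series_0 h True by blast
  then show ?thesis
    using add_closure_mono[OF range_mul_subset_op_series] by blast
next
  case False
  then have "g \<in> br_ops_into (Suc j div 2)"
    using g op_series_subset_br_ops_into by blast
  moreover obtain y where "h = br_op y" "length y = n - 1"
    using h False unfolding op_series_0 by blast
  ultimately have "commutator g h \<in> add_closure (br_ops (Suc j div 2))"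
    using commutator_br_ops_into by blast
  then show ?thesis
    using add_closure_mono[OF br_ops_subset_op_series] by blast
qed

lemma commutator_op_series_derived:
  assumes g: "g \<in> op_series j" and h: "h \<in> op_series j"
  shows "commutator g h \<in> add_closure (op_series (Suc j))"
proof (cases "g \<in> range mul \<or> h \<in> range mul")
  case True
  have "g \<in> op_series 0" "h \<in> op_series 0"
    using g h op_series_subset_op_series_0 by blast+
  then have "commutator g h \<in> add_closure (range mul)"
    using commutator_mul_op_series_0 True by blast
  then show ?thesis
    using add_closure_mono[OF range_mul_subset_op_series] by blast
next
  case False
  show ?thesis
  proof (cases "even j")
    case True
    with False g h have "g \<in> br_ops (j div 2)" "h \<in> br_ops (j div 2)"
      by (auto simp: op_series_def)
    then have "commutator g h \<in> add_closure (br_ops_into (Suc (j div 2)))"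
      by (rule commutator_br_ops)
    moreover have "br_ops_into (Suc (j div 2)) \<subseteq> op_series (Suc j)"
      using True by (auto simp: op_series_def)
    ultimately show ?thesis
      using add_closure_mono by blast
  next
    case odd: False
    with False g h have "g \<in> br_ops_into (Suc (j div 2))" "h \<in> br_ops_into (Suc (j div 2))"
      by (auto simp: op_series_def)
    moreover from this(2) obtain y where "h = br_op y" "length y = n - 1"
      unfolding br_ops_into_def by blast
    ultimately have "commutator g h \<in> add_closure (br_ops (Suc (j div 2)))"
      using commutator_br_ops_into by blast
    moreover have "br_ops (Suc (j div 2)) \<subseteq> op_series (Suc j)"
      using odd by (auto simp: op_series_def elim: oddE)
    ultimately show ?thesis
      using add_closure_mono by blast
  qed
qed

lemma commutator_op_series_top:
  assumes "derived s = {0}" and g: "g \<in> op_series (2 * s)" and h: "h \<in> op_series (2 * s)"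
  shows "commutator g h = (\<lambda>v. 0)"
proof -
  have zero: "f = (\<lambda>v. 0)" if f: "f \<in> br_ops s" for f
  proof -
    obtain ys i where ys: "f = br_op ys" "length ys = n - 1" "i < n - 1" "ys ! i \<in> derived s"
      using f unfolding br_ops_def by blast
    with assms(1) have "ys ! i = 0"
      by simp
    then have "(ys @ [v])[i := 0] = ys @ [v]" for v
      using ys by (metis list_update_id nth_append_left)
    then show ?thesis
      using ys n_ge_2 br_update_0[of "ys @ [_]" i] by (auto simp: br_op_def)
  qed
  show ?thesis
  proof (cases "g \<in> br_ops s \<or> h \<in> br_ops s")
    case True
    then consider "g = (\<lambda>v. 0)" | "h = (\<lambda>v. 0)"
      using zero by blast
    then show ?thesis
      by cases (simp_all add: commutator_def linear_0[OF linear_op_series[OF g]]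
          linear_0[OF linear_op_series[OF h]])
  next
    case False
    with g h show ?thesis
      by (auto simp: op_series_def commutator_mul_mul)
  qed
qed

end

locale acf0_poisson_n_lie = poisson_n_lie scale n mul br + acf0_space scale Basis
  for scale :: "'k::{alg_closed_field, field_char_0} \<Rightarrow> 'v::ab_group_add \<Rightarrow> 'v"
    and n mul br Basis
begin

lemma common_eigenvector_op_series_0:
  assumes "derived s = {0}" and "(UNIV :: 'v set) \<noteq> {0}"
  shows "\<exists>v. v \<noteq> 0 \<and> (\<forall>g\<in>op_series 0. \<exists>c. g v = scale c v)"
proof -
  let ?C = "\<lambda>j. add_closure (op_series j)"
  have "\<exists>v. v \<noteq> 0 \<and> (\<forall>g\<in>?C 0. \<exists>c. g v = scale c v)"
  proof (rule common_eigenvector_solvable_chain[of ?C "2 * s"])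
    show "\<forall>g\<in>?C 0. linear_map g"
      using linear_map_add_closure linear_op_series by blast
    show "?C k \<subseteq> ?C 0" for k
      by (rule add_closure_mono[OF op_series_subset_op_series_0])
    show "\<forall>a\<in>?C k. \<forall>x\<in>?C 0. commutator a x \<in> ?C k" for k
    proof (intro ballI)
      fix a x assume "a \<in> ?C k" "x \<in> ?C 0"
      then show "commutator a x \<in> ?C k"
        by (rule commutator_add_closure[rotated 3])
          (simp_all add: commutator_op_series_ideal linear_op_series)
    qed
    show "\<forall>a\<in>?C k. \<forall>b\<in>?C k. commutator a b \<in> ?C (Suc k)" for k
    proof (intro ballI)
      fix a b assume "a \<in> ?C k" "b \<in> ?C k"
      then show "commutator a b \<in> ?C (Suc k)"
        by (rule commutator_add_closure[rotated 3])
          (simp_all add: commutator_op_series_derived linear_op_series)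
    qed
    show "\<forall>a\<in>?C (2 * s). \<forall>b\<in>?C (2 * s). \<forall>v. a (b v) = b (a v)"
    proof (intro ballI allI)
      fix a b v assume "a \<in> ?C (2 * s)" "b \<in> ?C (2 * s)"
      then have "commutator a b \<in> add_closure {}"
        by (rule commutator_add_closure[rotated 3])
          (simp_all add: commutator_op_series_top[OF assms(1)] linear_op_series add_closure.zero)
      then show "a (b v) = b (a v)"
        by (auto simp: add_closure_empty commutator_def fun_eq_iff)
    qed
  qed fact
  then show ?thesis
    using add_closure.base by blast
qed

lemma common_eigenvector:
  assumes "derived s = {0}" and "(UNIV :: 'v set) \<noteq> {0}"
  shows "\<exists>v. v \<noteq> 0 \<and> (\<forall>x. \<exists>c. mul x v = scale c v) \<and>
    (\<forall>ys. length ys = n - 1 \<longrightarrow> (\<exists>c. br (ys @ [v]) = scale c v))"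
proof -
  obtain v where v: "v \<noteq> 0" "\<forall>g\<in>op_series 0. \<exists>c. g v = scale c v"
    using common_eigenvector_op_series_0[OF assms] by blast
  have "\<exists>c. mul x v = scale c v" for x
    using v(2) by (simp add: op_series_0)
  moreover have "\<exists>c. br (ys @ [v]) = scale c v" if "length ys = n - 1" for ys
  proof -
    have "br_op ys \<in> op_series 0"
      using that by (auto simp: op_series_0)
    with v(2) have "\<exists>c. br_op ys v = scale c v"
      by blast
    then show ?thesis
      by (simp add: br_op_def)
  qed
  ultimately show ?thesis
    using v(1) by blast
qed

end

lemma finite_dim_space_basis:
  assumes "finite_dim_space scale"
  obtains Basis where "finite_dimensional_vector_space scale Basis"
proof -
  interpret vector_space scale
    using assms by (simp add: finite_dim_space_def)
  obtain B where "finite B" "span B = UNIV"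
    using assms by (auto simp: finite_dim_space_def)
  obtain Basis where "Basis \<subseteq> B" "independent Basis" "B \<subseteq> span Basis"
    by (rule maximal_independent_subset)
  then have "span Basis = UNIV"
    using \<open>span B = UNIV\<close> span_minimal[of B "span Basis"] by auto
  with \<open>independent Basis\<close> \<open>finite B\<close> \<open>Basis \<subseteq> B\<close> show thesis
    by (intro that) (unfold_locales, auto intro: finite_subset)
qed

theorem theorem5p7:
  fixes scale :: "'k::{alg_closed_field, field_char_0} \<Rightarrow> 'v::ab_group_add \<Rightarrow> 'v"
    and n :: nat
    and mul :: "'v \<Rightarrow> 'v \<Rightarrow> 'v"
    and br :: "'v list \<Rightarrow> 'v"
  assumes "n \<ge> 2"
    and "poisson_n_lie_algebra scale n mul br"
    and "finite_dim_space scale"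
    and "(UNIV :: 'v set) \<noteq> {0}"
    and "solvable_poisson scale n mul br"
  shows "\<exists>v. v \<noteq> 0 \<and>
           (\<forall>x. \<exists>c. mul x v = scale c v) \<and>
           (\<forall>ys. length ys = n - 1 \<longrightarrow> (\<exists>c. br (ys @ [v]) = scale c v))"
proof -
  have "vector_space scale"
    using assms(2) by (simp add: poisson_n_lie_algebra_def)
  with assms(1,2) interpret poisson_n_lie scale n mul br
    by (simp add: poisson_n_lie_def poisson_n_lie_axioms_def endo_space_def)
  obtain Basis where "finite_dimensional_vector_space scale Basis"
    using assms(3) by (rule finite_dim_space_basis)
  then interpret acf0_poisson_n_lie scale n mul br Basis
    by (simp add: acf0_poisson_n_lie_def acf0_space_def poisson_n_lie_axioms endo_space_axioms)
  obtain s where "derived s = {0}"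
    using assms(5) by (auto simp: solvable_poisson_def)
  then show ?thesis
    using common_eigenvector assms(4) by blast
qed

end
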